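(* Let $M$ be a manifold with a Randers metric $Z$ having Zermelo data $(h,W)$, and let $f:U\subset M\to\mathbb{R}$ be a smooth function without critical points on the open set $U$. Let $\nabla f$ and $\widetilde{\nabla} f$ denote the gradients of $f$ with respect to $Z$ and $h$ respectively, and write $\|v\|=\sqrt{h(v,v)}$. Then on $U$: (a) $\dfrac{\|\widetilde{\nabla} f\|}{Z(\nabla f)}\big(\nabla f-Z(\nabla f)W\big)=\widetilde{\nabla} f$; (b) $Z(\nabla f)=\|\widetilde{\nabla} f\|+df(W)$.
   Context: Given a Riemannian metric $h$ on $M$ and a smooth vector field $W$ with $h(W,W)<1$, the Randers metric $Z:TM\to[0,\infty)$ with Zermelo data $(h,W)$ is defined for $v\neq0$ as the solution $Z(v)>0$ of $h\big(\frac{v}{Z(v)}-W,\frac{v}{Z(v)}-W\big)=1$ (and $Z(0)=0$); it is a Finsler metric. For a Finsler metric $F$ with fundamental tensor $g_v(u,w)=\frac12\frac{\partial^2}{\partial t\partial s}F^2(v+tu+sw)|_{t=s=0}$, the gradient $\nabla f$ of $f$ at a non-critical point is the unique vector with $df(\cdot)=g_{\nabla f}(\nabla f,\cdot)$; for a Riemannian metric this is the usual gradient. *)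

theory Defs
  imports "HOL-Analysis.Analysis"
begin

text \<open>We work in a coordinate chart: points of M and tangent vectors are both
  elements of a Euclidean space 'a. A Riemannian metric is a field of
  inner products h p on the tangent spaces.\<close>

definition riemannian_metric :: "'a set \<Rightarrow> ('a \<Rightarrow> 'a::euclidean_space \<Rightarrow> 'a \<Rightarrow> real) \<Rightarrow> bool" where
  "riemannian_metric U h \<longleftrightarrow>
     (\<forall>p\<in>U. bilinear (h p) \<and> (\<forall>u v. h p u v = h p v u) \<and> (\<forall>v. v \<noteq> 0 \<longrightarrow> h p v v > 0))"

definition randers :: "('a \<Rightarrow> 'a::euclidean_space \<Rightarrow> 'a \<Rightarrow> real) \<Rightarrow> ('a \<Rightarrow> 'a) \<Rightarrow> 'a \<Rightarrow> 'a \<Rightarrow> real" where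
  "randers h W p v =
     (if v = 0 then 0
      else (THE z. z > 0 \<and> h p ((1 / z) *\<^sub>R v - W p) ((1 / z) *\<^sub>R v - W p) = 1))"

definition fund_tensor :: "('a::real_vector \<Rightarrow> real) \<Rightarrow> 'a \<Rightarrow> 'a \<Rightarrow> 'a \<Rightarrow> real" where
  "fund_tensor F v u w =
     (1 / 2) * deriv (\<lambda>t. deriv (\<lambda>s. (F (v + t *\<^sub>R u + s *\<^sub>R w))\<^sup>2) 0) 0"

definition finsler_grad :: "('a::real_vector \<Rightarrow> real) \<Rightarrow> ('a \<Rightarrow> real) \<Rightarrow> 'a" where
  "finsler_grad F df = (THE y. \<forall>w. df w = fund_tensor F y y w)"

definition riem_grad :: "('a \<Rightarrow> 'a \<Rightarrow> 'a \<Rightarrow> real) \<Rightarrow> 'a \<Rightarrow> ('a \<Rightarrow> real) \<Rightarrow> 'a" where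
  "riem_grad h p df = (THE y. \<forall>w. df w = h p y w)"

end

theory Submission
  imports Defs
begin

text \<open>
  For every positively 1-homogeneous F one has g_y(y, w) = F(y) d_w F(y). For the Randers
  norm Z, differentiating its closed form gives d_w Z(y) = h(u, w) / (1 + h(u, W)), where
  u = y / Z(y) - W is h-unit. Hence g_y(y, -) = h(m u, -) with m = Z(y) / (1 + h(u, W)) > 0,
  so at the Z-gradient G the h-gradient is Gt = m u, whence m = |Gt| and u = Gt / |Gt|. Now
  G - Z(G) W = Z(G) u gives (a), and Z(G) = m (1 + h(u, W)) = |Gt| + h(Gt, W) = |Gt| + df(W)
  gives (b). Inverting y \<mapsto> m u explicitly shows that G exists and is unique.
\<close>

lemma bilinear_positive_definite_represents:
  fixes B :: "'a::euclidean_space \<Rightarrow> 'a \<Rightarrow> real"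
  assumes B: "bilinear B" and pd: "\<And>v. v \<noteq> 0 \<Longrightarrow> B v v > 0" and l: "linear l"
  shows "\<exists>c. l = B c"
proof -
  define T where "T y = (\<Sum>b\<in>Basis. B y b *\<^sub>R b)" for y
  have T_inner: "w \<bullet> T y = B y w" for y w
  proof -
    have "B y w = B y (\<Sum>b\<in>Basis. (w \<bullet> b) *\<^sub>R b)" by (simp add: euclidean_representation)
    also have "\<dots> = (\<Sum>b\<in>Basis. (w \<bullet> b) * B y b)"
      using B by (simp add: bilinear_def linear_sum linear_scale)
    also have "\<dots> = w \<bullet> T y"
      by (simp add: T_def inner_sum_right mult.commute)
    finally show ?thesis ..
  qed
  have "linear T"
    unfolding T_def using B
    by (intro linearI) (simp_all add: bilinear_ladd bilinear_lmul scaleR_add_left sum.distrib scaleR_sum_right)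
  moreover have "inj T"
  proof (rule linear_injective_0[OF \<open>linear T\<close>, THEN iffD2], intro allI impI)
    fix y assume "T y = 0"
    then have "B y y = 0" using T_inner[of y y] by simp
    then show "y = 0" using pd[of y] by (cases "y = 0") auto
  qed
  ultimately obtain c where c: "T c = adjoint l 1"
    by (metis linear_injective_imp_surjective surjD)
  have "l w = B c w" for w
    using adjoint_works[OF l, of w 1] by (simp add: c [symmetric] T_inner)
  then show ?thesis by blast
qed

lemma bilinear_positive_definite_inj:
  fixes B :: "'a::real_vector \<Rightarrow> 'a \<Rightarrow> real"
  assumes B: "bilinear B" and pd: "\<And>v. v \<noteq> 0 \<Longrightarrow> B v v > 0" and eq: "B c = B d"
  shows "c = d"
proof -
  have "B (c - d) (c - d) = 0" using eq by (simp add: bilinear_lsub[OF B])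
  then show ?thesis using pd[of "c - d"] by (cases "c = d") auto
qed

lemma fund_tensor_zero: "fund_tensor F 0 0 w = 0"
  by (simp add: fund_tensor_def)

lemma fund_tensor_self_homogeneous:
  fixes F :: "'a::real_vector \<Rightarrow> real"
  assumes hom: "\<And>c x. c > 0 \<Longrightarrow> F (c *\<^sub>R x) = c * F x"
    and D: "((\<lambda>s. F (y + s *\<^sub>R w)) has_real_derivative D) (at 0)"
  shows "fund_tensor F y y w = F y * D"
proof -
  have inner: "deriv (\<lambda>s. (F (y + t *\<^sub>R y + s *\<^sub>R w))\<^sup>2) 0 = 2 * (1 + t) * (F y * D)"
    if "t > -1" for t
  proof -
    define c where "c = 1 + t"
    have c: "c > 0" using that by (simp add: c_def)
    have "y + t *\<^sub>R y + s *\<^sub>R w = c *\<^sub>R (y + (s / c) *\<^sub>R w)" for s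
      using c by (simp add: scaleR_add_right) (simp add: c_def algebra_simps)
    then have line: "F (y + t *\<^sub>R y + s *\<^sub>R w) = c * F (y + (s / c) *\<^sub>R w)" for s
      by (simp add: hom[OF c])
    have "((\<lambda>s. s / c) has_real_derivative 1 / c) (at 0)"
      using c by (auto intro!: derivative_eq_intros)
    from DERIV_chain'[OF this, of "\<lambda>s. F (y + s *\<^sub>R w)" D] D
    have "((\<lambda>s. F (y + (s / c) *\<^sub>R w)) has_real_derivative D * (1 / c)) (at 0)"
      by simp
    then have "((\<lambda>s. (c * F (y + (s / c) *\<^sub>R w))\<^sup>2) has_real_derivative 2 * c * (F y * D)) (at 0)"
      using c by (auto intro!: derivative_eq_intros simp: power2_eq_square)
    then show ?thesis by (simp add: line DERIV_imp_deriv c_def)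
  qed
  have "eventually (\<lambda>t. t > -1) (nhds (0::real))"
    using eventually_nhds_in_open[of "{-1<..}" "0::real"] by auto
  then have "deriv (\<lambda>t. deriv (\<lambda>s. (F (y + t *\<^sub>R y + s *\<^sub>R w))\<^sup>2) 0) 0
      = deriv (\<lambda>t. 2 * (1 + t) * (F y * D)) 0"
    by (intro deriv_cong_ev) (auto elim: eventually_mono simp: inner)
  also have "\<dots> = 2 * (F y * D)"
    by (rule DERIV_imp_deriv) (auto intro!: derivative_eq_intros)
  finally show ?thesis by (simp add: fund_tensor_def)
qed

locale zermelo_data =
  fixes B :: "'a::euclidean_space \<Rightarrow> 'a \<Rightarrow> real" and W :: 'a
  assumes B_bilinear: "bilinear B" and B_sym: "B u v = B v u"
    and B_pos: "v \<noteq> 0 \<Longrightarrow> B v v > 0" and B_W_less_1: "B W W < 1"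
begin

lemma B_scaleR_left: "B (c *\<^sub>R x) y = c * B x y"
  using bilinear_lmul[OF B_bilinear] by simp

lemma B_scaleR_right: "B x (c *\<^sub>R y) = c * B x y"
  using bilinear_rmul[OF B_bilinear] by simp

lemmas B_distribs = bilinear_ladd[OF B_bilinear] bilinear_radd[OF B_bilinear]
  bilinear_lsub[OF B_bilinear] bilinear_rsub[OF B_bilinear] B_scaleR_left B_scaleR_right

lemma B_nonneg: "B v v \<ge> 0"
  using B_pos[of v] by (cases "v = 0") (auto simp: bilinear_lzero[OF B_bilinear])

lemma B_unit_W_gt: "B u u = 1 \<Longrightarrow> B u W > -1"
  using B_nonneg[of "u + W"] B_W_less_1 by (simp add: B_distribs B_sym[of W u])

definition lam :: real where "lam = 1 - B W W"

text \<open>For x \<noteq> 0 the defining equation h(x/z - W, x/z - W) = 1 of the Randers norm becomes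
  lam z^2 + 2 h(x, W) z - h(x, x) = 0, whose only positive root is the following.\<close>

definition randers_norm :: "'a \<Rightarrow> real" where
  "randers_norm x = (sqrt ((B x W)\<^sup>2 + lam * B x x) - B x W) / lam"

definition unit_dir :: "'a \<Rightarrow> 'a" where
  "unit_dir y = (1 / randers_norm y) *\<^sub>R y - W"

text \<open>The h-representative of the Legendre transform g_y(y, -) of the Randers norm.\<close>

definition legendre :: "'a \<Rightarrow> 'a" where
  "legendre y = (randers_norm y / (1 + B (unit_dir y) W)) *\<^sub>R unit_dir y"

definition norm_B :: "'a \<Rightarrow> real" where
  "norm_B v = sqrt (B v v)"

definition legendre_inv :: "'a \<Rightarrow> 'a" where
  "legendre_inv v = (norm_B v + B v W) *\<^sub>R (W + (1 / norm_B v) *\<^sub>R v)"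

lemma lam_pos: "lam > 0"
  using B_W_less_1 by (simp add: lam_def)

lemma randers_norm_0 [simp]: "randers_norm 0 = 0"
  by (simp add: randers_norm_def bilinear_lzero[OF B_bilinear])

lemma abs_B_W_less_sqrt: "x \<noteq> 0 \<Longrightarrow> \<bar>B x W\<bar> < sqrt ((B x W)\<^sup>2 + lam * B x x)"
  using B_pos[of x] lam_pos real_sqrt_less_mono[of "(B x W)\<^sup>2" "(B x W)\<^sup>2 + lam * B x x"]
  by simp

lemma randers_norm_pos: "x \<noteq> 0 \<Longrightarrow> randers_norm x > 0"
  using abs_B_W_less_sqrt[of x] lam_pos by (auto simp: randers_norm_def)

lemma randers_norm_iff:
  assumes "x \<noteq> 0"
  shows "z > 0 \<and> B ((1 / z) *\<^sub>R x - W) ((1 / z) *\<^sub>R x - W) = 1 \<longleftrightarrow> z = randers_norm x"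
proof (cases "z > 0")
  case True
  define a where "a = B x W"
  define Q where "Q = sqrt (a\<^sup>2 + lam * B x x)"
  have Q_gt: "\<bar>a\<bar> < Q" using abs_B_W_less_sqrt[OF assms] by (simp add: a_def Q_def)
  have Q_sq: "Q\<^sup>2 = a\<^sup>2 + lam * B x x" using B_nonneg[of x] lam_pos by (simp add: Q_def)
  have "(lam * z + a)\<^sup>2 - Q\<^sup>2 = - lam * z\<^sup>2 * (B ((1 / z) *\<^sub>R x - W) ((1 / z) *\<^sub>R x - W) - 1)"
    using True unfolding Q_sq
    by (simp add: B_distribs B_sym[of W x] a_def lam_def field_simps power2_eq_square)
  then have "B ((1 / z) *\<^sub>R x - W) ((1 / z) *\<^sub>R x - W) = 1 \<longleftrightarrow> (lam * z + a)\<^sup>2 = Q\<^sup>2"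
    using True lam_pos by auto
  also have "\<dots> \<longleftrightarrow> lam * z + a = Q"
    using mult_pos_pos[OF lam_pos True] Q_gt by (auto simp: power2_eq_iff)
  also have "\<dots> \<longleftrightarrow> z = randers_norm x"
    using lam_pos by (auto simp: randers_norm_def a_def Q_def field_simps)
  finally show ?thesis using True by simp
next
  case False
  then show ?thesis using randers_norm_pos[OF assms] by auto
qed

lemma randers_norm_scaleR:
  assumes "c \<ge> 0"
  shows "randers_norm (c *\<^sub>R x) = c * randers_norm x"
proof (cases "c = 0 \<or> x = 0")
  case False
  then have "c > 0" "x \<noteq> 0" "c *\<^sub>R x \<noteq> 0" using assms by auto
  moreover have "(1 / (c * randers_norm x)) *\<^sub>R (c *\<^sub>R x) = (1 / randers_norm x) *\<^sub>R x"
    using \<open>c > 0\<close> by simp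
  ultimately show ?thesis
    using randers_norm_iff[of x "randers_norm x"] randers_norm_iff[of "c *\<^sub>R x" "c * randers_norm x"]
    by auto
qed auto

lemma unit_dir_unit: "x \<noteq> 0 \<Longrightarrow> B (unit_dir x) (unit_dir x) = 1"
  using randers_norm_iff[of x "randers_norm x"] by (simp add: unit_dir_def)

lemma randers_norm_unit_dir: "x \<noteq> 0 \<Longrightarrow> x = randers_norm x *\<^sub>R (unit_dir x + W)"
  using randers_norm_pos[of x] by (simp add: unit_dir_def)

lemma randers_norm_line_has_derivative:
  assumes x: "x \<noteq> 0"
  defines "u \<equiv> unit_dir x"
  shows "((\<lambda>s. randers_norm (x + s *\<^sub>R w)) has_real_derivative B u w / (1 + B u W)) (at 0)"
proof -
  define Z where "Z = randers_norm x"
  define k where "k = B u W"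
  define a where "a = B x W"
  define b where "b = B w W"
  define P where "P s = (a + s * b)\<^sup>2 + lam * (B x x + 2 * s * B x w + s\<^sup>2 * B w w)" for s
  have x_eq: "x = Z *\<^sub>R (u + W)" unfolding Z_def u_def by (rule randers_norm_unit_dir[OF x])
  have Z_pos: "Z > 0" unfolding Z_def by (rule randers_norm_pos[OF x])
  have k_gt: "k > -1" unfolding k_def u_def by (rule B_unit_W_gt[OF unit_dir_unit[OF x]])
  have line: "randers_norm (x + s *\<^sub>R w) = (sqrt (P s) - (a + s * b)) / lam" for s
    by (simp add: randers_norm_def P_def a_def b_def B_distribs B_sym[of w x] power2_eq_square algebra_simps)
  have a_eq: "a = Z * (k + B W W)"
    unfolding a_def k_def by (subst x_eq) (simp add: B_distribs)
  have xw_eq: "B x w = Z * (B u w + b)"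
    unfolding b_def by (subst x_eq) (simp add: B_distribs B_sym[of W w])
  have "sqrt (P 0) = lam * Z + a"
    using lam_pos by (simp add: P_def Z_def randers_norm_def a_def)
  then have P0: "sqrt (P 0) = Z * (1 + k)"
    by (simp add: a_eq lam_def algebra_simps)
  have P0_pos: "sqrt (P 0) > 0" using Z_pos k_gt by (simp add: P0)
  then have "P 0 > 0" by simp
  then have "((\<lambda>s. (sqrt (P s) - (a + s * b)) / lam) has_real_derivative
      ((2 * a * b + lam * (2 * B x w)) / (2 * sqrt (P 0)) - b) / lam) (at 0)"
    using lam_pos unfolding P_def by (auto intro!: derivative_eq_intros simp: field_simps)
  moreover have "((2 * a * b + lam * (2 * B x w)) / (2 * sqrt (P 0)) - b) / lam = B u w / (1 + k)"
  proof -
    have "((2 * a * b + lam * (2 * B x w)) / (2 * sqrt (P 0)) - b) / lam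
        = (2 * a * b + lam * (2 * B x w) - 2 * sqrt (P 0) * b) / (2 * sqrt (P 0) * lam)"
      using P0_pos lam_pos by (simp add: field_simps)
    also have "\<dots> = (2 * lam * Z * B u w) / (2 * (Z * (1 + k)) * lam)"
      by (simp add: P0 a_eq xw_eq lam_def algebra_simps)
    also have "\<dots> = B u w / (1 + k)"
      using Z_pos lam_pos by simp
    finally show ?thesis .
  qed
  ultimately show ?thesis by (simp add: line k_def)
qed

lemma fund_tensor_randers_norm:
  assumes "y \<noteq> 0"
  shows "fund_tensor randers_norm y y w = B (legendre y) w"
proof -
  have "fund_tensor randers_norm y y w
      = randers_norm y * (B (unit_dir y) w / (1 + B (unit_dir y) W))"
    by (rule fund_tensor_self_homogeneous[OF randers_norm_scaleR
          randers_norm_line_has_derivative[OF assms]]) simp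
  then show ?thesis by (simp add: legendre_def B_scaleR_left)
qed

lemma norm_B_pos: "v \<noteq> 0 \<Longrightarrow> norm_B v > 0"
  using B_pos[of v] by (simp add: norm_B_def)

lemma norm_B_scaleR_unit: "B u u = 1 \<Longrightarrow> m \<ge> 0 \<Longrightarrow> norm_B (m *\<^sub>R u) = m"
  by (simp add: norm_B_def B_distribs real_sqrt_mult)

lemma legendre_inv_legendre:
  assumes "y \<noteq> 0"
  shows "legendre_inv (legendre y) = y"
proof -
  define u where "u = unit_dir y"
  define m where "m = randers_norm y / (1 + B u W)"
  have u: "B u u = 1" unfolding u_def by (rule unit_dir_unit[OF assms])
  have "m > 0"
    using randers_norm_pos[OF assms] B_unit_W_gt[OF u] by (simp add: m_def)
  then have "legendre_inv (m *\<^sub>R u) = (m * (1 + B u W)) *\<^sub>R (u + W)"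
    by (simp add: legendre_inv_def norm_B_scaleR_unit[OF u] B_scaleR_left algebra_simps)
  also have "\<dots> = y"
    using B_unit_W_gt[OF u] randers_norm_unit_dir[OF assms] by (simp add: m_def u_def)
  finally show ?thesis by (simp add: legendre_def m_def u_def)
qed

lemma
  assumes "v \<noteq> 0"
  shows legendre_inv_nonzero: "legendre_inv v \<noteq> 0"
    and randers_norm_legendre_inv: "randers_norm (legendre_inv v) = norm_B v + B v W"
    and legendre_legendre_inv: "legendre (legendre_inv v) = v"
proof -
  define N where "N = norm_B v"
  define n where "n = (1 / N) *\<^sub>R v"
  define c where "c = N + B v W"
  have N: "N > 0" unfolding N_def by (rule norm_B_pos[OF assms])
  have v: "v = N *\<^sub>R n" using N by (simp add: n_def)
  have "N * N = B v v" using B_nonneg[of v] by (simp add: N_def norm_B_def)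
  then have n: "B n n = 1" using N by (simp add: n_def B_distribs flip: \<open>N * N = B v v\<close>)
  have c: "c = N * (1 + B n W)" by (simp add: c_def v B_scaleR_left algebra_simps)
  then have "c > 0" using N B_unit_W_gt[OF n] by simp
  have y: "legendre_inv v = c *\<^sub>R (W + n)" by (simp add: legendre_inv_def c_def N_def n_def)
  show nonzero: "legendre_inv v \<noteq> 0"
  proof
    assume "legendre_inv v = 0"
    then have "n = - W" using \<open>c > 0\<close> by (simp add: y add_eq_0_iff2)
    then show False
      using n B_W_less_1 by (simp add: bilinear_lneg[OF B_bilinear] bilinear_rneg[OF B_bilinear])
  qed
  have "(1 / c) *\<^sub>R legendre_inv v - W = n" using \<open>c > 0\<close> by (simp add: y)
  then have Z: "randers_norm (legendre_inv v) = c"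
    using randers_norm_iff[OF nonzero, of c] \<open>c > 0\<close> n by simp
  then show "randers_norm (legendre_inv v) = norm_B v + B v W" by (simp add: c_def N_def)
  have "unit_dir (legendre_inv v) = n" unfolding unit_dir_def Z by fact
  then have "legendre (legendre_inv v) = (c / (1 + B n W)) *\<^sub>R n" by (simp add: legendre_def Z)
  also have "\<dots> = v" using B_unit_W_gt[OF n] by (simp add: c v)
  finally show "legendre (legendre_inv v) = v" .
qed

lemma finsler_grad_randers_norm:
  assumes "v \<noteq> 0"
  shows "finsler_grad randers_norm (B v) = legendre_inv v"
  unfolding finsler_grad_def
proof (rule the_equality)
  show "\<forall>w. B v w = fund_tensor randers_norm (legendre_inv v) (legendre_inv v) w"
    using assms by (simp add: fund_tensor_randers_norm legendre_inv_nonzero legendre_legendre_inv)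
next
  fix y assume y: "\<forall>w. B v w = fund_tensor randers_norm y y w"
  have "y \<noteq> 0"
  proof
    assume "y = 0"
    then have "B v v = 0" using y by (simp add: fund_tensor_zero)
    then show False using B_pos[OF assms] by simp
  qed
  then have "B (legendre y) = B v" using y by (simp add: fund_tensor_randers_norm fun_eq_iff)
  then have "legendre y = v" by (metis bilinear_positive_definite_inj B_bilinear B_pos)
  then show "y = legendre_inv v" using legendre_inv_legendre[OF \<open>y \<noteq> 0\<close>] by simp
qed

lemma randers_gradient:
  assumes v: "v \<noteq> 0"
  defines "G \<equiv> finsler_grad randers_norm (B v)"
  shows "(norm_B v / randers_norm G) *\<^sub>R (G - randers_norm G *\<^sub>R W) = v"
    and "randers_norm G = norm_B v + B v W"
proof -
  have G: "G = legendre_inv v" unfolding G_def by (rule finsler_grad_randers_norm[OF v])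
  show Z: "randers_norm G = norm_B v + B v W" unfolding G by (rule randers_norm_legendre_inv[OF v])
  have "G - randers_norm G *\<^sub>R W = (randers_norm G / norm_B v) *\<^sub>R v"
    using norm_B_pos[OF v] unfolding Z
    by (simp add: G legendre_inv_def scaleR_add_right add_divide_distrib scaleR_add_left)
  moreover have "randers_norm G > 0" unfolding G by (rule randers_norm_pos[OF legendre_inv_nonzero[OF v]])
  ultimately show "(norm_B v / randers_norm G) *\<^sub>R (G - randers_norm G *\<^sub>R W) = v"
    using norm_B_pos[OF v] by simp
qed

lemma randers_eq_randers_norm:
  assumes "h p = B" and "Wf p = W"
  shows "randers h Wf p = randers_norm"
  by (auto simp: fun_eq_iff randers_def randers_norm_iff assms)

lemma riem_grad_eq:
  assumes "h p = B"
  shows "riem_grad h p (B v) = v"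
  unfolding riem_grad_def assms
  by (rule the_equality) (auto intro: bilinear_positive_definite_inj[OF B_bilinear B_pos] simp: fun_eq_iff)

end

theorem lemma3p1:
  fixes U :: "'a::euclidean_space set"
    and h :: "'a \<Rightarrow> 'a \<Rightarrow> 'a \<Rightarrow> real"
    and W :: "'a \<Rightarrow> 'a"
    and f :: "'a \<Rightarrow> real"
    and df :: "'a \<Rightarrow> 'a \<Rightarrow> real"
  assumes "open U"
    and "riemannian_metric U h"
    and "\<forall>p\<in>U. h p (W p) (W p) < 1"
    and "\<forall>p\<in>U. (f has_derivative df p) (at p)"
    and "\<forall>p\<in>U. df p \<noteq> (\<lambda>v. 0)"
  shows "\<forall>p\<in>U.
     (let G = finsler_grad (randers h W p) (df p);
          Gt = riem_grad h p (df p);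
          Zp = randers h W p
      in (sqrt (h p Gt Gt) / Zp G) *\<^sub>R (G - Zp G *\<^sub>R W p) = Gt
         \<and> Zp G = sqrt (h p Gt Gt) + df p (W p))"
proof
  fix p assume p: "p \<in> U"
  interpret zermelo_data "h p" "W p"
    using assms(2,3) p unfolding riemannian_metric_def by unfold_locales auto
  obtain v where v: "df p = h p v"
    using bilinear_positive_definite_represents[OF B_bilinear B_pos]
      has_derivative_linear assms(4) p by metis
  have "h p 0 = (\<lambda>w. 0)" by (simp add: fun_eq_iff bilinear_lzero[OF B_bilinear])
  then have "v \<noteq> 0" using assms(5) p v by auto
  have "randers h W p = randers_norm" by (rule randers_eq_randers_norm) simp_all
  moreover have "riem_grad h p (df p) = v" by (simp add: v riem_grad_eq)
  ultimately show "let G = finsler_grad (randers h W p) (df p);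
          Gt = riem_grad h p (df p);
          Zp = randers h W p
      in (sqrt (h p Gt Gt) / Zp G) *\<^sub>R (G - Zp G *\<^sub>R W p) = Gt
         \<and> Zp G = sqrt (h p Gt Gt) + df p (W p)"
    using randers_gradient[OF \<open>v \<noteq> 0\<close>] by (simp add: Let_def v norm_B_def)
qed

end
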